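(* If the coarse structure ${\downarrow}\mathcal E_X$ of a ballean $X$ has a linearly ordered base, then $X$ has bounded growth.
   Context: A ballean is a pair $(X,\mathcal E_X)$ where $X$ is a set and $\mathcal E_X$ is a family of subsets of $X\times X$ (entourages) such that: each $E\in\mathcal E_X$ contains the diagonal $\Delta_X$; for any $E,F\in\mathcal E_X$ there is $D\in\mathcal E_X$ with $E\circ F^{-1}\subset D$; and $\bigcup\mathcal E_X=X\times X$. For $E\subset X\times X$, $x\in X$, $A\subset X$: $E[x]=\{y:(x,y)\in E\}$, $E[A]=\bigcup_{a\in A}E[a]$. $B\subset X$ is bounded if $B\subset E[x]$ for some $E\in\mathcal E_X$, $x\in X$. The coarse structure generated by $\mathcal E_X$ is ${\downarrow}\mathcal E_X=\{E\subset X\times X:\Delta_X\subset E\subset F\text{ for some }F\in\mathcal E_X\}$; it has a linearly ordered base if some subfamily of it, linearly ordered by inclusion, has the property that every member of ${\downarrow}\mathcal E_X$ is contained in a member of the subfamily. $X$ has bounded growth if there is $G\subset X\times X$ with $G[B]$ bounded for all bounded $B\subset X$, and for each $E\in\mathcal E_X$ a bounded $B$ with $E[x]\subset G[x]$ for all $x\in X\setminus B$. *)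

theory Defs
  imports Main
begin

text \<open>Ball(ean) structures. Entourage E, point x, set A:
  E[x] = E `` {x},  E[A] = E `` A.  Composition E \<circ> F = E O F
  (pairs (x,z) with (x,y) in E and (y,z) in F).\<close>

definition ballean :: "'a set \<Rightarrow> ('a \<times> 'a) set set \<Rightarrow> bool" where
  "ballean X Ent \<longleftrightarrow>
     (\<forall>E\<in>Ent. E \<subseteq> X \<times> X) \<and>
     (\<forall>E\<in>Ent. Id_on X \<subseteq> E) \<and>
     (\<forall>E\<in>Ent. \<forall>F\<in>Ent. \<exists>D\<in>Ent. E O converse F \<subseteq> D) \<and>
     \<Union>Ent = X \<times> X"

definition bounded_in :: "'a set \<Rightarrow> ('a \<times> 'a) set set \<Rightarrow> 'a set \<Rightarrow> bool" where
  "bounded_in X Ent B \<longleftrightarrow> B \<subseteq> X \<and> (\<exists>E\<in>Ent. \<exists>x\<in>X. B \<subseteq> E `` {x})"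

definition coarse_structure :: "'a set \<Rightarrow> ('a \<times> 'a) set set \<Rightarrow> ('a \<times> 'a) set set" where
  "coarse_structure X Ent = {E. Id_on X \<subseteq> E \<and> (\<exists>F\<in>Ent. E \<subseteq> F)}"

definition has_linearly_ordered_base :: "('a \<times> 'a) set set \<Rightarrow> bool" where
  "has_linearly_ordered_base C \<longleftrightarrow>
     (\<exists>L. L \<subseteq> C \<and> (\<forall>A\<in>L. \<forall>B\<in>L. A \<subseteq> B \<or> B \<subseteq> A) \<and>
          (\<forall>E\<in>C. \<exists>L'\<in>L. E \<subseteq> L'))"

definition has_bounded_growth :: "'a set \<Rightarrow> ('a \<times> 'a) set set \<Rightarrow> bool" where
  "has_bounded_growth X Ent \<longleftrightarrow>
     (\<exists>G. G \<subseteq> X \<times> X \<and>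
          (\<forall>B. bounded_in X Ent B \<longrightarrow> bounded_in X Ent (G `` B)) \<and>
          (\<forall>E\<in>Ent. \<exists>B. bounded_in X Ent B \<and> (\<forall>x\<in>X - B. E `` {x} \<subseteq> G `` {x})))"

end

theory Submission
  imports Defs
begin

text \<open>Fix a centre \<open>x\<^sub>0\<close> and a linearly ordered base \<open>L\<close>, and let \<open>G\<close> relate \<open>x\<close> to \<open>y\<close> when \<open>(x, y)\<close>
  lies in every base entourage whose ball around \<open>x\<^sub>0\<close> contains \<open>x\<close>. Outside the ball of a
  base entourage \<open>A\<close>, only base entourages larger than \<open>A\<close> can capture \<open>x\<close>, so \<open>G\<close> dominates
  \<open>A\<close> there; and on a ball \<open>A[x\<^sub>0]\<close> the relation \<open>G\<close> is contained in \<open>A\<close>, so \<open>G\<close> maps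
  bounded sets into balls of \<open>A \<circ> A\<close>.\<close>

lemma
  assumes "ballean X Ent"
  shows ballean_subset: "E \<in> Ent \<Longrightarrow> E \<subseteq> X \<times> X"
    and ballean_Id_on_subset: "E \<in> Ent \<Longrightarrow> Id_on X \<subseteq> E"
    and ballean_relcomp_converse_subset:
      "E \<in> Ent \<Longrightarrow> F \<in> Ent \<Longrightarrow> \<exists>D\<in>Ent. E O converse F \<subseteq> D"
    and ballean_Union: "\<Union>Ent = X \<times> X"
  using assms unfolding ballean_def by auto

lemma ballean_converse_subset:
  assumes X: "ballean X Ent" and F: "F \<in> Ent"
  shows "\<exists>D\<in>Ent. converse F \<subseteq> D"
proof -
  obtain D where D: "D \<in> Ent" "F O converse F \<subseteq> D"
    using ballean_relcomp_converse_subset[OF X F F] by blast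
  have "converse F \<subseteq> F O converse F"
  proof
    fix p assume "p \<in> converse F"
    then obtain a c where p: "p = (c, a)" "(a, c) \<in> F" by auto
    then have "(c, c) \<in> F"
      using ballean_subset[OF X F] ballean_Id_on_subset[OF X F] by blast
    with p show "p \<in> F O converse F" by blast
  qed
  with D show ?thesis by blast
qed

lemma ballean_relcomp_subset:
  assumes X: "ballean X Ent" and E: "E \<in> Ent" and F: "F \<in> Ent"
  shows "\<exists>D\<in>Ent. E O F \<subseteq> D"
proof -
  obtain F' where F': "F' \<in> Ent" "converse F \<subseteq> F'"
    using ballean_converse_subset[OF X F] by blast
  obtain D where "D \<in> Ent" "E O converse F' \<subseteq> D"
    using ballean_relcomp_converse_subset[OF X E F'(1)] by blast
  moreover have "E O F \<subseteq> E O converse F'" using F'(2) by blast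
  ultimately show ?thesis by blast
qed

lemma ballean_entourage_in_coarse_structure:
  "ballean X Ent \<Longrightarrow> E \<in> Ent \<Longrightarrow> E \<in> coarse_structure X Ent"
  unfolding coarse_structure_def using ballean_Id_on_subset by blast

lemma bounded_in_subset_ball:
  assumes X: "ballean X Ent" and x0: "x0 \<in> X" and B: "bounded_in X Ent B"
  shows "\<exists>D\<in>Ent. B \<subseteq> D `` {x0}"
proof -
  obtain E y where E: "E \<in> Ent" "y \<in> X" "B \<subseteq> E `` {y}"
    using B unfolding bounded_in_def by blast
  obtain F where F: "F \<in> Ent" "(x0, y) \<in> F"
    using ballean_Union[OF X] x0 E(2) by blast
  obtain D where "D \<in> Ent" "F O E \<subseteq> D"
    using ballean_relcomp_subset[OF X F(1) E(1)] by blast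
  with E(3) F(2) show ?thesis by blast
qed

lemma bounded_in_subset_entourage_ball:
  assumes X: "ballean X Ent" and x0: "x0 \<in> X" and F: "F \<in> Ent" and "B \<subseteq> F `` {x0}"
  shows "bounded_in X Ent B"
  using assms ballean_subset[OF X F] unfolding bounded_in_def by blast

definition chain_growth :: "'a set \<Rightarrow> ('a \<times> 'a) set set \<Rightarrow> 'a \<Rightarrow> ('a \<times> 'a) set" where
  "chain_growth X L x0 = {(x, y) \<in> X \<times> X. \<forall>A\<in>L. x \<in> A `` {x0} \<longrightarrow> (x, y) \<in> A}"

lemma chain_growth_subset: "chain_growth X L x0 \<subseteq> X \<times> X"
  unfolding chain_growth_def by blast

lemma chain_growth_image_bounded:
  assumes X: "ballean X Ent" and x0: "x0 \<in> X"
    and L: "L \<subseteq> coarse_structure X Ent"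
    and cofinal: "\<forall>E\<in>coarse_structure X Ent. \<exists>A\<in>L. E \<subseteq> A"
    and B: "bounded_in X Ent B"
  shows "bounded_in X Ent (chain_growth X L x0 `` B)"
proof -
  obtain D where D: "D \<in> Ent" "B \<subseteq> D `` {x0}"
    using bounded_in_subset_ball[OF X x0 B] by blast
  obtain A where A: "A \<in> L" "D \<subseteq> A"
    using cofinal ballean_entourage_in_coarse_structure[OF X D(1)] by blast
  obtain F where F: "F \<in> Ent" "A \<subseteq> F"
    using A(1) L unfolding coarse_structure_def by blast
  obtain FF where FF: "FF \<in> Ent" "F O F \<subseteq> FF"
    using ballean_relcomp_subset[OF X F(1) F(1)] by blast
  have "chain_growth X L x0 `` B \<subseteq> (A O A) `` {x0}"
    using A D(2) unfolding chain_growth_def by blast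
  also have "\<dots> \<subseteq> FF `` {x0}" using F(2) FF(2) by blast
  finally show ?thesis
    using bounded_in_subset_entourage_ball[OF X x0 FF(1)] by blast
qed

lemma chain_growth_dominates:
  assumes X: "ballean X Ent" and x0: "x0 \<in> X"
    and L: "L \<subseteq> coarse_structure X Ent"
    and chain: "\<forall>A\<in>L. \<forall>A'\<in>L. A \<subseteq> A' \<or> A' \<subseteq> A"
    and cofinal: "\<forall>E\<in>coarse_structure X Ent. \<exists>A\<in>L. E \<subseteq> A"
    and E: "E \<in> Ent"
  shows "\<exists>B. bounded_in X Ent B \<and> (\<forall>x\<in>X - B. E `` {x} \<subseteq> chain_growth X L x0 `` {x})"
proof -
  obtain A where A: "A \<in> L" "E \<subseteq> A"
    using cofinal ballean_entourage_in_coarse_structure[OF X E] by blast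
  obtain F where F: "F \<in> Ent" "A \<subseteq> F"
    using A(1) L unfolding coarse_structure_def by blast
  have "bounded_in X Ent (A `` {x0})"
    using bounded_in_subset_entourage_ball[OF X x0 F(1)] F(2) by blast
  moreover have "E `` {x} \<subseteq> chain_growth X L x0 `` {x}" if x: "x \<in> X - A `` {x0}" for x
  proof
    fix y assume y: "y \<in> E `` {x}"
    have "y \<in> X" using y ballean_subset[OF X E] by blast
    moreover have "(x, y) \<in> A'" if "A' \<in> L" "x \<in> A' `` {x0}" for A'
    proof -
      have "A \<subseteq> A'" using chain A(1) that x by blast
      then show ?thesis using y A(2) by blast
    qed
    ultimately show "y \<in> chain_growth X L x0 `` {x}"
      using x unfolding chain_growth_def by blast
  qed
  ultimately show ?thesis by blast
qed

theorem proposition3p4: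
  fixes X :: "'a set" and Ent :: "('a \<times> 'a) set set"
  assumes "ballean X Ent"
    and "X \<noteq> {}"
    and "has_linearly_ordered_base (coarse_structure X Ent)"
  shows "has_bounded_growth X Ent"
proof -
  obtain x0 where x0: "x0 \<in> X" using assms(2) by blast
  obtain L where L: "L \<subseteq> coarse_structure X Ent"
    and chain: "\<forall>A\<in>L. \<forall>A'\<in>L. A \<subseteq> A' \<or> A' \<subseteq> A"
    and cofinal: "\<forall>E\<in>coarse_structure X Ent. \<exists>A\<in>L. E \<subseteq> A"
    using assms(3) unfolding has_linearly_ordered_base_def by meson
  show ?thesis
    unfolding has_bounded_growth_def
  proof (intro exI[of _ "chain_growth X L x0"] conjI allI impI ballI)
    show "chain_growth X L x0 \<subseteq> X \<times> X"
      by (rule chain_growth_subset)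
    show "bounded_in X Ent (chain_growth X L x0 `` B)" if "bounded_in X Ent B" for B
      using chain_growth_image_bounded[OF assms(1) x0 L cofinal that] .
    show "\<exists>B. bounded_in X Ent B \<and> (\<forall>x\<in>X - B. E `` {x} \<subseteq> chain_growth X L x0 `` {x})"
      if "E \<in> Ent" for E
      using chain_growth_dominates[OF assms(1) x0 L chain cofinal that] .
  qed
qed

end
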